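(* Let $A\in \mathbb{R}^{m\times n}$ and $b\in \mathbb{R}^m$ with $m<n$. Suppose that the linear system $Ax=b$ is consistent and has a solution $x_*$. Suppose there are index sets $\mathbb{I}_1\subseteq\{1,\dots,m\}$ and $\mathbb{I}_2\subseteq\{1,\dots,n\}$ with $\operatorname{card}(\mathbb{I}_1)=\operatorname{card}(\mathbb{I}_2)=\operatorname{rank}(A)$ such that the submatrix $A_{(\mathbb{I}_1,\mathbb{I}_2)}$ is nonsingular and the subvector $x_{*\mathbb{I}_2}$ has no zero entry. Let $\mathbb{I}_2^{c}=\{1,\dots,n\}\setminus\mathbb{I}_2$. (a) If not all entries of $x_{*\mathbb{I}_2^{c}}$ are $0$, then $Ax=b$ has infinitely many solutions with the same sign pattern as $x_*$. (b) $Ax=b$ has infinitely many solutions $x$ such that $x_{\mathbb{I}_2}$ has the same sign pattern as $x_{*\mathbb{I}_2}$. (c) If $x_{*\mathbb{I}_2^{c}}=0$, then $Ax=b$ has no solution other than $x_*$ with the same sign pattern as $x_*$.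
   Context: For a matrix $X$ and index sets $\mathbb{I}_1,\mathbb{I}_2$, $X_{(\mathbb{I}_1,\mathbb{I}_2)}$ is the submatrix consisting of the entries $X_{(i,j)}$ with $i\in\mathbb{I}_1$, $j\in\mathbb{I}_2$; for a vector $x$, $x_{\mathbb{I}}$ is the subvector of entries $x_{(i)}$, $i\in\mathbb{I}$. $\operatorname{card}$ denotes cardinality. The sign function is $\operatorname{sign}(r)=1,0,-1$ for $r>0$, $r=0$, $r<0$. A vector $x$ has the sign pattern $s\in\{-1,0,1\}^n$ if $\operatorname{sign}(x_{(i)})=s_{(i)}$ for all $i$; two vectors have the same sign pattern if their entrywise signs agree. *)

theory Defs
  imports "Jordan_Normal_Form.DL_Rank" "Jordan_Normal_Form.DL_Submatrix"
begin

definition same_sign_on :: "nat set \<Rightarrow> real vec \<Rightarrow> real vec \<Rightarrow> bool" where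
  "same_sign_on J x y \<longleftrightarrow> (\<forall>i\<in>J. sgn (x $ i) = sgn (y $ i))"

end

(* If the columns of A indexed by I2 carry a nonsingular minor, they are linearly independent,
   and since there are rank A of them they span the column space.  So every column j outside I2
   gives a kernel vector v of A supported on I2 and j with v_j ~= 0.  For small t > 0 the solutions
   x* + t v keep the signs of x* on I2, and on all indices when x*_j ~= 0; this gives (a) and (b).
   If x* vanishes off I2, a solution with the sign pattern of x* differs from x* by a kernel vector
   supported on I2, which is zero by independence; this is (c). *)

theory Submission
  imports Defs "Jordan_Normal_Form.DL_Rank_Submatrix"
begin

lemma card_less_in_set:
  fixes I :: "nat set"
  assumes "finite I" "i \<in> I"
  shows "card {a \<in> I. a < i} < card I"
proof -
  have "{a \<in> I. a < i} \<subset> I" using assms(2) by blast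
  then show ?thesis using assms(1) by (meson psubset_card_mono)
qed

lemma bij_betw_pick:
  assumes "finite I"
  shows "bij_betw (pick I) {..<card I} I"
proof (rule bij_betw_imageI)
  have "pick I k < pick I l" if "k < l" "l < card I" for k l
    using that by (intro pick_mono) auto
  then show "inj_on (pick I) {..<card I}"
    by (intro strict_mono_on_imp_inj_on) (simp add: strict_mono_on_def)
  show "pick I ` {..<card I} = I"
  proof
    show "pick I ` {..<card I} \<subseteq> I" using pick_in_set[of _ I] by auto
    show "I \<subseteq> pick I ` {..<card I}"
    proof
      fix i assume "i \<in> I"
      then have "card {a \<in> I. a < i} \<in> {..<card I}"
        by (simp add: card_less_in_set[OF assms])
      from rev_image_eqI[where f = "pick I", OF this pick_card_in_set[OF \<open>i \<in> I\<close>, symmetric]]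
      show "i \<in> pick I ` {..<card I}" .
    qed
  qed
qed

text \<open>\<^term>\<open>pick I l\<close> is the \<open>l\<close>-th smallest element of \<open>I\<close> (counting from 0), and \<open>k \<in> I\<close> is
  the \<^term>\<open>card {a \<in> I. a < k}\<close>-th one: \<open>vec_compress I\<close> lists the entries of a vector at \<open>I\<close> in
  increasing order, and \<open>vec_expand n I\<close> puts them back, padding with zeros.\<close>

definition vec_compress :: "nat set \<Rightarrow> 'a vec \<Rightarrow> 'a vec" where
  "vec_compress I d = vec (card I) (\<lambda>l. d $ pick I l)"

definition vec_expand :: "nat \<Rightarrow> nat set \<Rightarrow> 'a :: zero vec \<Rightarrow> 'a vec" where
  "vec_expand n I w = vec n (\<lambda>k. if k \<in> I then w $ card {a \<in> I. a < k} else 0)"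

lemma vec_compress_carrier [simp]: "vec_compress I d \<in> carrier_vec (card I)"
  by (simp add: vec_compress_def)

lemma vec_expand_carrier [simp]: "vec_expand n I w \<in> carrier_vec n"
  by (simp add: vec_expand_def)

lemma vec_expand_outside: "k < n \<Longrightarrow> k \<notin> I \<Longrightarrow> vec_expand n I w $ k = 0"
  by (simp add: vec_expand_def)

lemma vec_compress_expand:
  assumes "I \<subseteq> {0..<n}" "w \<in> carrier_vec (card I)"
  shows "vec_compress I (vec_expand n I w) = w"
proof (rule eq_vecI)
  fix l assume "l < dim_vec w"
  then have l: "l < card I" using assms(2) by simp
  then have "pick I l \<in> I" "card {a \<in> I. a < pick I l} = l"
    by (simp_all add: pick_in_set card_pick)
  with l assms(1) show "vec_compress I (vec_expand n I w) $ l = w $ l"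
    by (auto simp: vec_compress_def vec_expand_def)
qed (use assms in simp)

lemma vec_compress_eq_0:
  assumes I: "I \<subseteq> {0..<n}" and d: "d \<in> carrier_vec n"
    and supp: "\<forall>k<n. k \<notin> I \<longrightarrow> d $ k = 0"
    and "vec_compress I d = 0\<^sub>v (card I)"
  shows "d = 0\<^sub>v n"
proof (rule eq_vecI)
  fix k assume "k < dim_vec (0\<^sub>v n)"
  then have k: "k < n" by simp
  show "d $ k = 0\<^sub>v n $ k"
  proof (cases "k \<in> I")
    case True
    have "card {a \<in> I. a < k} < card I"
      using I True by (intro card_less_in_set) (auto intro: finite_subset)
    then have "d $ k = vec_compress I d $ card {a \<in> I. a < k}"
      using pick_card_in_set[OF True] by (simp add: vec_compress_def)
    with \<open>card {a \<in> I. a < k} < card I\<close> assms(4) k show ?thesis by simp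
  qed (use supp k in simp)
qed (use d in simp)

lemma submatrix_UNIV_carrier:
  assumes "A \<in> carrier_mat m n" "J \<subseteq> {0..<n}"
  shows "submatrix A UNIV J \<in> carrier_mat m (card J)"
proof -
  have "{j. j < n \<and> j \<in> J} = J" using assms(2) by auto
  with assms(1) show ?thesis by (intro carrier_matI) (simp_all add: dim_submatrix)
qed

lemma mult_mat_vec_supported:
  assumes A: "A \<in> carrier_mat m n" and I: "I \<subseteq> {0..<n}" and d: "d \<in> carrier_vec n"
    and supp: "\<forall>k<n. k \<notin> I \<longrightarrow> d $ k = 0"
  shows "A *\<^sub>v d = submatrix A UNIV I *\<^sub>v vec_compress I d"
proof -
  have fin: "finite I" using I finite_subset by blast
  have cI: "{j. j < n \<and> j \<in> I} = I" using I by auto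
  have B: "submatrix A UNIV I \<in> carrier_mat m (card I)" by (rule submatrix_UNIV_carrier[OF A I])
  show ?thesis
  proof (rule eq_vecI)
    fix i assume "i < dim_vec (submatrix A UNIV I *\<^sub>v vec_compress I d)"
    then have i: "i < m" using B by simp
    have "(A *\<^sub>v d) $ i = (\<Sum>k\<in>{0..<n}. A $$ (i, k) * d $ k)"
      using A d i by (simp add: scalar_prod_def)
    also have "\<dots> = (\<Sum>k\<in>I. A $$ (i, k) * d $ k)"
      by (rule sum.mono_neutral_right) (use I supp in auto)
    also have "\<dots> = (\<Sum>l<card I. A $$ (i, pick I l) * d $ pick I l)"
      using sum.reindex_bij_betw[OF bij_betw_pick[OF fin], of "\<lambda>k. A $$ (i, k) * d $ k"] by simp
    also have "\<dots> = (submatrix A UNIV I *\<^sub>v vec_compress I d) $ i"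
    proof -
      have "submatrix A UNIV I $$ (i, l) = A $$ (i, pick I l)" if "l < card I" for l
        using submatrix_index[of i A UNIV l I] i A cI that by (simp add: pick_UNIV)
      then show ?thesis
        using i B by (simp add: scalar_prod_def lessThan_atLeast0 vec_compress_def)
    qed
    finally show "(A *\<^sub>v d) $ i = (submatrix A UNIV I *\<^sub>v vec_compress I d) $ i" .
  qed (use A B in simp)
qed

lemma (in vec_space) cols_submatrix_lin_indpt:
  assumes A: "A \<in> carrier_mat n nc" and det: "det (submatrix A I J) \<noteq> 0"
  shows "distinct (cols (submatrix A UNIV J))" and "lin_indpt (set (cols (submatrix A UNIV J)))"
proof -
  let ?B = "submatrix A UNIV J" and ?C = "submatrix A I J"
  define k where "k = card {i. i < n \<and> i \<in> I}"
  have C: "?C \<in> carrier_mat k k"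
    using A det unfolding k_def det_def by (auto simp: dim_submatrix split: if_splits)
  have dist_C: "distinct (cols ?C)"
    using vec_space.non_distinct_low_rank[OF C] vec_space.low_rank_det_zero[OF C det] by fastforce
  then show "distinct (cols ?B)"
    by (metis distinct_cols_submatrix_UNIV submatrix_split)
  have B: "?B \<in> carrier_mat n (dim_col ?B)"
    using A by (intro carrier_matI) (simp_all add: dim_submatrix)
  show "lin_indpt (set (cols ?B))"
  proof
    assume "lin_dep (set (cols ?B))"
    from lin_dep_submatrix_UNIV[OF B this] dist_C
    have "LinearCombinations.module.lin_dep class_ring (module_vec TYPE('a) k) (set (cols ?C))"
      unfolding k_def by (metis submatrix_split)
    then obtain v where "v \<in> carrier_vec k" "v \<noteq> 0\<^sub>v k" "?C *\<^sub>v v = 0\<^sub>v k"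
      using vec_space.lin_depE[OF C _ dist_C] by blast
    then show False using det det_0_iff_vec_prod_zero[OF C] by blast
  qed
qed

lemma (in vec_space) supported_kernel_vec_eq_0:
  fixes A :: "'a mat"
  assumes A: "A \<in> carrier_mat n nc" and J: "J \<subseteq> {0..<nc}" and det: "det (submatrix A I J) \<noteq> 0"
    and d: "d \<in> carrier_vec nc" and supp: "\<forall>k<nc. k \<notin> J \<longrightarrow> d $ k = 0"
    and Ad: "A *\<^sub>v d = 0\<^sub>v n"
  shows "d = 0\<^sub>v nc"
proof -
  have "submatrix A UNIV J *\<^sub>v vec_compress J d = 0\<^sub>v n"
    using mult_mat_vec_supported[OF A J d supp] Ad by simp
  then have "vec_compress J d = 0\<^sub>v (card J)"
    using lin_depI[OF submatrix_UNIV_carrier[OF A J], of "vec_compress J d"]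
      cols_submatrix_lin_indpt[OF A det] by auto
  then show ?thesis by (rule vec_compress_eq_0[OF J d supp])
qed

lemma (in vec_space) col_in_span_cols_submatrix:
  assumes A: "A \<in> carrier_mat n nc" and J: "J \<subseteq> {0..<nc}" and det: "det (submatrix A I J) \<noteq> 0"
    and rank: "card J = rank A" and j: "j < nc"
  obtains w where "w \<in> carrier_vec (card J)" "submatrix A UNIV J *\<^sub>v w = col A j"
proof -
  let ?B = "submatrix A UNIV J"
  define T where "T = set (cols ?B)"
  have B: "?B \<in> carrier_mat n (card J)" by (rule submatrix_UNIV_carrier[OF A J])
  have dist: "distinct (cols ?B)" and indpt: "lin_indpt T"
    using cols_submatrix_lin_indpt[OF A det] unfolding T_def by simp_all
  have T: "T \<subseteq> carrier_vec n" "finite T" "card T = card J"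
    using B distinct_card[OF dist] unfolding T_def by (auto simp: cols_def)
  have col: "col A j \<in> carrier_vec n" "col A j \<in> set (cols A)"
    using A j by (auto simp: cols_def)
  have "col A j \<in> span T"
  proof (rule ccontr)
    assume not_span: "col A j \<notin> span T"
    then have "col A j \<notin> T" using in_own_span[OF T(1)] by blast
    have "T \<union> {col A j} \<subseteq> set (cols A)"
      using cols_submatrix_subset col(2) unfolding T_def by blast
    moreover have "lin_indpt (T \<union> {col A j})"
      using lin_dep_iff_in_span[OF T(1) indpt col(1) \<open>col A j \<notin> T\<close>] not_span by blast
    ultimately have "card (T \<union> {col A j}) \<le> rank A" by (rule rank_ge_card_indpt[OF A])
    with \<open>col A j \<notin> T\<close> T rank show False by simp
  qed
  then obtain a where "lincomb a T = col A j" using finite_in_span[OF T(2,1)] by blast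
  with mat_mult_eq_lincomb[OF B dist] show ?thesis
    by (intro that[of "vec (card J) (\<lambda>i. a (col ?B i))"]) (simp_all add: T_def)
qed

lemma (in vec_space) kernel_vec_through_col:
  assumes A: "A \<in> carrier_mat n nc" and J: "J \<subseteq> {0..<nc}" and det: "det (submatrix A I J) \<noteq> 0"
    and rank: "card J = rank A" and j: "j < nc" "j \<notin> J"
  obtains v where "v \<in> carrier_vec nc" "A *\<^sub>v v = 0\<^sub>v n" "v $ j \<noteq> 0"
    "\<forall>k<nc. k \<notin> J \<and> k \<noteq> j \<longrightarrow> v $ k = 0"
proof -
  obtain w where w: "w \<in> carrier_vec (card J)" "submatrix A UNIV J *\<^sub>v w = col A j"
    using col_in_span_cols_submatrix[OF A J det rank j(1)] .
  let ?d = "vec_expand nc J w"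
  have "A *\<^sub>v ?d = col A j"
    using mult_mat_vec_supported[OF A J vec_expand_carrier] vec_compress_expand[OF J w(1)] w(2)
    by (simp add: vec_expand_outside)
  moreover have "A *\<^sub>v unit_vec nc j = col A j"
    using A j by (intro eq_vecI) auto
  ultimately have "A *\<^sub>v (?d - unit_vec nc j) = 0\<^sub>v n"
    using A j by (simp add: mult_minus_distrib_mat_vec)
  moreover have "(?d - unit_vec nc j) $ j \<noteq> 0"
    using j by (simp add: vec_expand_outside)
  ultimately show ?thesis
    using j by (intro that[of "?d - unit_vec nc j"]) (auto simp: vec_expand_outside)
qed

lemma sgn_add_small:
  fixes a e :: real
  assumes "\<bar>e\<bar> < \<bar>a\<bar>"
  shows "sgn (a + e) = sgn a"
  using assms by (cases "a > 0") (auto simp: sgn_if)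

lemma infinite_same_sign_solutions:
  fixes A :: "real mat"
  assumes A: "A \<in> carrier_mat m n" and y: "y \<in> carrier_vec n"
    and v: "v \<in> carrier_vec n" "A *\<^sub>v v = 0\<^sub>v m" "v $ j \<noteq> 0" and j: "j < n"
    and J: "J \<subseteq> {0..<n}" and compatible: "\<forall>k\<in>J. y $ k = 0 \<longrightarrow> v $ k = 0"
  shows "infinite {x \<in> carrier_vec n. A *\<^sub>v x = A *\<^sub>v y \<and> same_sign_on J x y}"
proof -
  let ?K = "{k \<in> J. y $ k \<noteq> 0}"
  have "finite J" using J by (rule finite_subset) simp
  then have "finite ?K" by simp
  have "\<forall>\<^sub>F t in at_right 0. \<forall>k\<in>?K. \<bar>t * v $ k\<bar> < \<bar>y $ k\<bar>"
    unfolding eventually_ball_finite_distrib[OF \<open>finite ?K\<close>]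
  proof
    fix k assume "k \<in> ?K"
    have "((\<lambda>t. \<bar>t * v $ k\<bar>) \<longlongrightarrow> 0) (at_right 0)"
      by (auto intro!: tendsto_eq_intros)
    with \<open>k \<in> ?K\<close> show "\<forall>\<^sub>F t in at_right 0. \<bar>t * v $ k\<bar> < \<bar>y $ k\<bar>"
      by (intro order_tendstoD) auto
  qed
  then obtain \<delta> :: real where "\<delta> > 0"
    and small: "\<And>t. 0 < t \<Longrightarrow> t < \<delta> \<Longrightarrow> \<forall>k\<in>?K. \<bar>t * v $ k\<bar> < \<bar>y $ k\<bar>"
    by (auto simp: eventually_at_right_field)
  let ?f = "\<lambda>t. y + t \<cdot>\<^sub>v v"
  have "inj_on ?f {0<..<\<delta>}"
  proof (rule inj_onI)
    fix s t assume "?f s = ?f t"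
    then have "?f s $ j = ?f t $ j" by simp
    then show "s = t" using y v j by simp
  qed
  moreover have "?f ` {0<..<\<delta>} \<subseteq> {x \<in> carrier_vec n. A *\<^sub>v x = A *\<^sub>v y \<and> same_sign_on J x y}"
  proof (rule image_subsetI)
    fix t assume t: "t \<in> {0<..<\<delta>}"
    have "A *\<^sub>v ?f t = A *\<^sub>v y + t \<cdot>\<^sub>v (A *\<^sub>v v)"
      using A y v by (simp add: mult_add_distrib_mat_vec mult_mat_vec)
    also have "\<dots> = A *\<^sub>v y"
      using A v(2) by (intro eq_vecI) simp_all
    moreover have "sgn (?f t $ k) = sgn (y $ k)" if "k \<in> J" for k
    proof (cases "y $ k = 0")
      case False
      with small t \<open>k \<in> J\<close> have "\<bar>t * v $ k\<bar> < \<bar>y $ k\<bar>" by auto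
      with \<open>k \<in> J\<close> J y v show ?thesis by (auto simp: sgn_add_small)
    qed (use \<open>k \<in> J\<close> J y v compatible in auto)
    ultimately show "?f t \<in> {x \<in> carrier_vec n. A *\<^sub>v x = A *\<^sub>v y \<and> same_sign_on J x y}"
      using y v by (simp add: same_sign_on_def)
  qed
  ultimately show ?thesis
    using infinite_Ioo[OF \<open>\<delta> > 0\<close>] by (meson finite_imageD infinite_super)
qed

lemma same_sign_solution_unique:
  fixes A :: "real mat"
  assumes A: "A \<in> carrier_mat m n" and J: "J \<subseteq> {0..<n}" and det: "det (submatrix A I J) \<noteq> 0"
    and y: "y \<in> carrier_vec n" and zero: "\<forall>k\<in>{0..<n} - J. y $ k = 0"
    and x: "x \<in> carrier_vec n" "A *\<^sub>v x = A *\<^sub>v y" "same_sign_on {0..<n} x y"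
  shows "x = y"
proof -
  have supp: "\<forall>k<n. k \<notin> J \<longrightarrow> (x - y) $ k = 0"
  proof (intro allI impI)
    fix k assume "k < n" "k \<notin> J"
    with zero x(3) have "y $ k = 0" "sgn (x $ k) = sgn (y $ k)"
      by (auto simp: same_sign_on_def)
    with \<open>k < n\<close> x(1) y show "(x - y) $ k = 0" by (simp add: sgn_eq_0_iff)
  qed
  have "A *\<^sub>v (x - y) = 0\<^sub>v m"
    using A x y by (simp add: mult_minus_distrib_mat_vec)
  with vec_space.supported_kernel_vec_eq_0[OF A J det _ supp] x(1) y
  have diff: "x - y = 0\<^sub>v n" by simp
  show ?thesis
  proof (rule eq_vecI)
    fix i assume "i < dim_vec y"
    with y have "i < n" by simp
    with diff have "(x - y) $ i = 0" by simp
    with \<open>i < n\<close> x(1) y show "x $ i = y $ i" by simp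
  qed (use x(1) y in simp)
qed

theorem lemma2p1:
  fixes A :: "real mat" and b xs :: "real vec" and m n :: nat and I1 I2 :: "nat set"
  assumes A: "A \<in> carrier_mat m n" and b: "b \<in> carrier_vec m"
    and mn: "m < n"
    and xs: "xs \<in> carrier_vec n" "A *\<^sub>v xs = b"
    and I1: "I1 \<subseteq> {0..<m}" and I2: "I2 \<subseteq> {0..<n}"
    and cards: "card I1 = vec_space.rank m A" "card I2 = vec_space.rank m A"
    and nonsing: "det (submatrix A I1 I2) \<noteq> 0"
    and nz: "\<forall>i\<in>I2. xs $ i \<noteq> 0"
  shows
    "((\<exists>i\<in>{0..<n} - I2. xs $ i \<noteq> 0) \<longrightarrow>
        infinite {x \<in> carrier_vec n. A *\<^sub>v x = b \<and> same_sign_on {0..<n} x xs})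
     \<and> infinite {x \<in> carrier_vec n. A *\<^sub>v x = b \<and> same_sign_on I2 x xs}
     \<and> ((\<forall>i\<in>{0..<n} - I2. xs $ i = 0) \<longrightarrow>
        (\<forall>x \<in> carrier_vec n. A *\<^sub>v x = b \<and> same_sign_on {0..<n} x xs \<longrightarrow> x = xs))"
proof (intro conjI impI ballI)
  assume "\<exists>i\<in>{0..<n} - I2. xs $ i \<noteq> 0"
  then obtain j where j: "j < n" "j \<notin> I2" "xs $ j \<noteq> 0" by auto
  obtain v where v: "v \<in> carrier_vec n" "A *\<^sub>v v = 0\<^sub>v m" "v $ j \<noteq> 0"
    "\<forall>k<n. k \<notin> I2 \<and> k \<noteq> j \<longrightarrow> v $ k = 0"
    using vec_space.kernel_vec_through_col[OF A I2 nonsing cards(2) j(1,2)] .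
  have "\<forall>k\<in>{0..<n}. xs $ k = 0 \<longrightarrow> v $ k = 0" using v(4) nz j(3) by auto
  from infinite_same_sign_solutions[OF A xs(1) v(1-3) j(1) subset_refl this] xs(2)
  show "infinite {x \<in> carrier_vec n. A *\<^sub>v x = b \<and> same_sign_on {0..<n} x xs}" by simp
next
  have "card I2 < card {0..<n}" using card_mono[OF _ I1] cards mn by simp
  then have "I2 \<noteq> {0..<n}" by auto
  with I2 have "\<not> {0..<n} \<subseteq> I2" by blast
  then obtain j where j: "j < n" "j \<notin> I2" by (auto simp: subset_iff)
  obtain v where "v \<in> carrier_vec n" "A *\<^sub>v v = 0\<^sub>v m" "v $ j \<noteq> 0"
    using vec_space.kernel_vec_through_col[OF A I2 nonsing cards(2) j] .
  from infinite_same_sign_solutions[OF A xs(1) this j(1) I2] nz xs(2)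
  show "infinite {x \<in> carrier_vec n. A *\<^sub>v x = b \<and> same_sign_on I2 x xs}" by simp
next
  fix x assume "\<forall>i\<in>{0..<n} - I2. xs $ i = 0" "x \<in> carrier_vec n"
    "A *\<^sub>v x = b \<and> same_sign_on {0..<n} x xs"
  with same_sign_solution_unique[OF A I2 nonsing xs(1)] xs(2) show "x = xs" by simp
qed

end
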